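(* Let $A$ be an $n\times n$ decomposable generalized tournament matrix, let $I$ be a nontrivial clan of $A$, and let $x\in I$. Then $A$ is inseparable if and only if $A[([n]\setminus I)\cup\{x\}]$ is inseparable.
   Context: A generalized tournament matrix of order $n$ is a real $n\times n$ matrix $M=(m_{ij})$ with nonnegative entries satisfying $M+M^{t}=J_n-I_n$. Write $[n]=\{1,\ldots,n\}$; $M[Z]$ is the principal submatrix indexed by $Z$ (itself a generalized tournament matrix on index set $Z$). A clan of $M$ (with index set $V$) is a subset $X\subseteq V$ such that for all $i,j\in X$ and $k\in V\setminus X$, $m_{ik}=m_{jk}$ and $m_{ki}=m_{kj}$; the empty set, singletons and $V$ are trivial clans; $M$ is decomposable if it has a nontrivial clan. $M$ is separable if $V$ can be partitioned into two nonempty clans, and inseparable otherwise. *)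

theory Defs
  imports Complex_Main
begin

text \<open>A real matrix is represented as a function of type nat => nat => real;
  the index set V is carried explicitly. The principal submatrix M[Z] is M
  considered on the index set Z.\<close>

definition gen_tournament :: "(nat \<Rightarrow> nat \<Rightarrow> real) \<Rightarrow> nat set \<Rightarrow> bool" where
  "gen_tournament M V \<longleftrightarrow>
     (\<forall>i\<in>V. \<forall>j\<in>V. M i j \<ge> 0 \<and> M i j + M j i = (if i = j then 0 else 1))"

definition clan :: "(nat \<Rightarrow> nat \<Rightarrow> real) \<Rightarrow> nat set \<Rightarrow> nat set \<Rightarrow> bool" where
  "clan M V X \<longleftrightarrow> X \<subseteq> V \<and>
     (\<forall>i\<in>X. \<forall>j\<in>X. \<forall>k\<in>V - X. M i k = M j k \<and> M k i = M k j)"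

definition trivial_clan :: "nat set \<Rightarrow> nat set \<Rightarrow> bool" where
  "trivial_clan V X \<longleftrightarrow> X = {} \<or> (\<exists>a. X = {a}) \<or> X = V"

definition nontrivial_clan :: "(nat \<Rightarrow> nat \<Rightarrow> real) \<Rightarrow> nat set \<Rightarrow> nat set \<Rightarrow> bool" where
  "nontrivial_clan M V X \<longleftrightarrow> clan M V X \<and> \<not> trivial_clan V X"

definition decomposable :: "(nat \<Rightarrow> nat \<Rightarrow> real) \<Rightarrow> nat set \<Rightarrow> bool" where
  "decomposable M V \<longleftrightarrow> (\<exists>X. nontrivial_clan M V X)"

definition separable :: "(nat \<Rightarrow> nat \<Rightarrow> real) \<Rightarrow> nat set \<Rightarrow> bool" where
  "separable M V \<longleftrightarrow> (\<exists>X Y. X \<noteq> {} \<and> Y \<noteq> {} \<and> X \<inter> Y = {} \<and> X \<union> Y = V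
      \<and> clan M V X \<and> clan M V Y)"

definition inseparable :: "(nat \<Rightarrow> nat \<Rightarrow> real) \<Rightarrow> nat set \<Rightarrow> bool" where
  "inseparable M V \<longleftrightarrow> \<not> separable M V"

end

theory Submission imports Defs begin

text \<open>Write \<open>W = (V - I) \<union> {x}\<close>. A bipartition of \<open>W\<close> into clans lifts to \<open>V\<close> by replacing
  \<open>x\<close> with the whole clan \<open>I\<close> in the part containing \<open>x\<close>. Conversely, a bipartition of \<open>V\<close>
  into clans restricts to one of \<open>W\<close>, unless one part lies inside \<open>I - {x}\<close>; but then the
  other part contains \<open>V - I\<close>, which forces \<open>V - I\<close> to be a clan of \<open>W\<close>, so that
  \<open>{x}\<close> and \<open>V - I\<close> separate \<open>W\<close>.\<close>

lemma clanI:
  "X \<subseteq> V \<Longrightarrow> (\<And>i j k. i \<in> X \<Longrightarrow> j \<in> X \<Longrightarrow> k \<in> V \<Longrightarrow> k \<notin> X \<Longrightarrow> M i k = M j k \<and> M k i = M k j)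
    \<Longrightarrow> clan M V X"
  unfolding clan_def by blast

lemma clanD:
  "clan M V X \<Longrightarrow> i \<in> X \<Longrightarrow> j \<in> X \<Longrightarrow> k \<in> V \<Longrightarrow> k \<notin> X \<Longrightarrow> M i k = M j k \<and> M k i = M k j"
  unfolding clan_def by blast

lemma clan_subset: "clan M V X \<Longrightarrow> X \<subseteq> V"
  unfolding clan_def by blast

lemma clan_restrict: "clan M V X \<Longrightarrow> U \<subseteq> V \<Longrightarrow> clan M U (X \<inter> U)"
  unfolding clan_def by blast

lemma clan_singleton: "x \<in> V \<Longrightarrow> clan M V {x}"
  by (rule clanI) auto

lemma separableI:
  "X \<noteq> {} \<Longrightarrow> Y \<noteq> {} \<Longrightarrow> X \<inter> Y = {} \<Longrightarrow> X \<union> Y = V \<Longrightarrow> clan M V X \<Longrightarrow> clan M V Y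
    \<Longrightarrow> separable M V"
  unfolding separable_def by blast

lemma separableE:
  assumes "separable M V"
  obtains X Y where "X \<noteq> {}" "Y \<noteq> {}" "X \<inter> Y = {}" "X \<union> Y = V" "clan M V X" "clan M V Y"
  using assms unfolding separable_def by blast

lemma separable_if_clan_delete:
  assumes "x \<in> V" "V - {x} \<noteq> {}" "clan M V (V - {x})"
  shows "separable M V"
  by (rule separableI[OF _ assms(2) _ _ clan_singleton[OF assms(1)] assms(3)]) (use assms(1) in auto)

lemma separable_restrict:
  assumes "X \<inter> Y = {}" "X \<union> Y = V" "clan M V X" "clan M V Y"
    and "U \<subseteq> V" "X \<inter> U \<noteq> {}" "Y \<inter> U \<noteq> {}"
  shows "separable M U"
  using assms by (intro separableI[of "X \<inter> U" "Y \<inter> U"] clan_restrict) auto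

lemma clan_inflate:
  assumes I: "clan M V I" "x \<in> I"
    and X: "clan M ((V - I) \<union> {x}) X" "x \<in> X"
  shows "clan M V (X \<union> I)"
proof (rule clanI)
  show "X \<union> I \<subseteq> V"
    using clan_subset[OF I(1)] clan_subset[OF X(1)] I(2) by blast
next
  fix i j k assume i: "i \<in> X \<union> I" and j: "j \<in> X \<union> I" and k: "k \<in> V" "k \<notin> X \<union> I"
  have like_x: "M l k = M x k \<and> M k l = M k x" if "l \<in> X \<union> I" for l
  proof (cases "l \<in> I")
    case True
    then show ?thesis using clanD[OF I(1) True I(2)] k by blast
  next
    case False
    then show ?thesis using clanD[OF X(1) _ X(2)] that k by blast
  qed
  show "M i k = M j k \<and> M k i = M k j"
    using like_x[OF i] like_x[OF j] by simp
qed

lemma clan_lift_outside: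
  assumes I: "clan M V I" "x \<in> I"
    and Y: "clan M ((V - I) \<union> {x}) Y" "Y \<subseteq> V - I"
  shows "clan M V Y"
proof (rule clanI)
  show "Y \<subseteq> V" using Y(2) by blast
next
  fix i j k assume i: "i \<in> Y" and j: "j \<in> Y" and k: "k \<in> V" "k \<notin> Y"
  show "M i k = M j k \<and> M k i = M k j"
  proof (cases "k \<in> I")
    case True
    have "M i k = M i x \<and> M k i = M x i" "M j k = M j x \<and> M k j = M x j"
      using clanD[OF I(1) True I(2)] i j Y(2) by auto
    moreover have "M i x = M j x \<and> M x i = M x j"
      using clanD[OF Y(1) i j, of x] I(2) Y(2) by blast
    ultimately show ?thesis by argo
  next
    case False
    then show ?thesis using clanD[OF Y(1) i j] k by blast
  qed
qed

lemma separable_if_separable_contract: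
  assumes I: "clan M V I" "x \<in> I"
    and sep: "separable M ((V - I) \<union> {x})"
  shows "separable M V"
proof -
  let ?W = "(V - I) \<union> {x}"
  have lift: "separable M V"
    if XY: "X \<noteq> {}" "Y \<noteq> {}" "X \<inter> Y = {}" "X \<union> Y = ?W" "clan M ?W X" "clan M ?W Y"
      and "x \<in> X" for X Y
  proof -
    have "Y \<subseteq> V - I" using XY(3,4) \<open>x \<in> X\<close> by blast
    then show ?thesis
      using XY clan_subset[OF I(1)] I(2)
      by (intro separableI[OF _ XY(2) _ _ clan_inflate[OF I XY(5) \<open>x \<in> X\<close>]
            clan_lift_outside[OF I XY(6)]]) auto
  qed
  from sep obtain X Y where XY: "X \<noteq> {}" "Y \<noteq> {}" "X \<inter> Y = {}" "X \<union> Y = ?W"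
    "clan M ?W X" "clan M ?W Y"
    by (rule separableE)
  show ?thesis
  proof (cases "x \<in> X")
    case True
    then show ?thesis by (rule lift[OF XY])
  next
    case False
    then have "x \<in> Y" using XY(4) by blast
    then show ?thesis using lift[OF XY(2,1) _ _ XY(6,5)] XY(3,4) by blast
  qed
qed

lemma clan_complement_contract:
  assumes I: "clan M V I" "x \<in> I"
    and Y: "clan M V Y" "V - I \<subseteq> Y" "y \<in> I" "y \<notin> Y"
  shows "clan M ((V - I) \<union> {x}) (V - I)"
proof (rule clanI)
  fix i j k assume i: "i \<in> V - I" and j: "j \<in> V - I" and k: "k \<in> (V - I) \<union> {x}" "k \<notin> V - I"
  have "k = x" using k by blast
  have "M i x = M i y \<and> M x i = M y i" "M j x = M j y \<and> M x j = M y j"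
    using clanD[OF I(1) I(2) Y(3)] i j by auto
  moreover have "M i y = M j y \<and> M y i = M y j"
    using clanD[OF Y(1)] i j Y(2-4) clan_subset[OF I(1)] by blast
  ultimately show "M i k = M j k \<and> M k i = M k j"
    using \<open>k = x\<close> by simp
qed blast

lemma separable_contract_if_separable:
  assumes I: "clan M V I" "x \<in> I" "V - I \<noteq> {}"
    and sep: "separable M V"
  shows "separable M ((V - I) \<union> {x})"
proof -
  let ?W = "(V - I) \<union> {x}"
  have "?W \<subseteq> V" using clan_subset[OF I(1)] I(2) by blast
  have inside: "separable M ?W"
    if Y: "clan M V Y" and X: "X \<noteq> {}" "X \<inter> ?W = {}" "X \<union> Y = V" "X \<inter> Y = {}" for X Y
  proof -
    obtain y where "y \<in> X" using X(1) by blast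
    then have "clan M ?W (V - I)"
      using X I(1) by (intro clan_complement_contract[OF I(1,2) Y, of y]) (auto dest: clan_subset)
    moreover have "?W - {x} = V - I" using I(2) by blast
    ultimately show ?thesis
      using separable_if_clan_delete[of x ?W M] I(3) by simp
  qed
  from sep obtain X Y where XY: "X \<noteq> {}" "Y \<noteq> {}" "X \<inter> Y = {}" "X \<union> Y = V"
    "clan M V X" "clan M V Y"
    by (rule separableE)
  consider "X \<inter> ?W = {}" | "Y \<inter> ?W = {}" | "X \<inter> ?W \<noteq> {}" "Y \<inter> ?W \<noteq> {}"
    by blast
  then show ?thesis
  proof cases
    case 1
    then show ?thesis using inside[OF XY(6) XY(1)] XY(3,4) by blast
  next
    case 2
    then show ?thesis using inside[OF XY(5) XY(2)] XY(3,4) by blast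
  next
    case 3
    then show ?thesis using separable_restrict[OF XY(3-6) \<open>?W \<subseteq> V\<close>] by blast
  qed
qed

theorem lemma5p4:
  fixes A :: "nat \<Rightarrow> nat \<Rightarrow> real" and n :: nat and I :: "nat set" and x :: nat
  assumes "gen_tournament A {1..n}"
    and "decomposable A {1..n}"
    and "nontrivial_clan A {1..n} I"
    and "x \<in> I"
  shows "inseparable A {1..n} \<longleftrightarrow> inseparable A (({1..n} - I) \<union> {x})"
proof -
  \<comment> \<open>Only \<open>I \<noteq> {1..n}\<close> is needed from nontriviality.\<close>
  have I: "clan A {1..n} I" and "\<not> trivial_clan {1..n} I"
    using assms(3) unfolding nontrivial_clan_def by auto
  then have "{1..n} - I \<noteq> {}"
    using clan_subset[OF I] unfolding trivial_clan_def by blast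
  then show ?thesis
    unfolding inseparable_def
    using separable_contract_if_separable[OF I assms(4)]
      separable_if_separable_contract[OF I assms(4)] by blast
qed

end
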